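(* Let $n\ge 2$, $1\le d\le n-1$, and consider a network of the type below on nodes $\{1,\dots,n\}$ in which node $i$ has degree $d$. Then $$\Delta_i\le \frac{\lambda_s}{\lambda}\,\frac{n}{d+1}\left(1+\sum_{d_2=0}^{d-1}\prod_{d_1=0}^{d_2}\frac{d-d_1}{d+1}\right),$$ with equality when the $d$ neighbours of $i$ have degree $1$ (i.e., the only links incident to them are their links to $i$).
   Context: Version-age model. A gossip network on a finite node set $\mathcal N$ is specified by source rates $\lambda_{0j}>0$ and gossip rates $\lambda_{ij}\ge 0$ ($i\neq j$; rate at which $i$ sends to $j$); $\lambda_s>0$ is the source's update rate. For nonempty $S\subseteq\mathcal N$ let $N(S)=\{i\in\mathcal N\setminus S:\ \sum_{j\in S}\lambda_{ij}>0\}$ and define $$\Delta_S=\frac{\lambda_s+\sum_{i\in N(S)}\big(\sum_{j\in S}\lambda_{ij}\big)\Delta_{S\cup\{i\}}}{\sum_{j\in S}\lambda_{0j}+\sum_{i\in N(S)}\sum_{j\in S}\lambda_{ij}}$$ (well defined by downward induction on $|S|$); $\Delta_i=\Delta_{\{i\}}$. Networks with uniform link rate: node set $\{1,\dots,n\}$, $\lambda_{0j}=\lambda/n$ for all $j$, and a set of links (unordered pairs of distinct nodes); for each link $\{a,b\}$, $\lambda_{ab}=\lambda_{ba}=\lambda/n$, and $\lambda_{ab}=0$ if $\{a,b\}$ is not a link. The degree of a node is the number of links incident to it. *)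

theory Defs
  imports Complex_Main
begin

text \<open>Version-age model on a finite node set N with source update rate ls,
  source rates l0 j and gossip rates l i j (rate at which i sends to j).\<close>

definition gossip_nbrs :: "'a set \<Rightarrow> ('a \<Rightarrow> 'a \<Rightarrow> real) \<Rightarrow> 'a set \<Rightarrow> 'a set" where
  "gossip_nbrs N l S = {i \<in> N - S. (\<Sum>j\<in>S. l i j) > 0}"

text \<open>Recursion with fuel k = card (N - S); the recursive calls on S \<union> {i}
  for i in the neighbourhood have fuel one less (downward induction on |S|).\<close>
fun delta_aux :: "nat \<Rightarrow> 'a set \<Rightarrow> real \<Rightarrow> ('a \<Rightarrow> real) \<Rightarrow> ('a \<Rightarrow> 'a \<Rightarrow> real) \<Rightarrow> 'a set \<Rightarrow> real" where
  "delta_aux 0 N ls l0 l S = ls / (\<Sum>j\<in>S. l0 j)"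
| "delta_aux (Suc k) N ls l0 l S =
     (ls + (\<Sum>i\<in>gossip_nbrs N l S. (\<Sum>j\<in>S. l i j) * delta_aux k N ls l0 l (insert i S)))
     / ((\<Sum>j\<in>S. l0 j) + (\<Sum>i\<in>gossip_nbrs N l S. \<Sum>j\<in>S. l i j))"

definition version_age :: "'a set \<Rightarrow> real \<Rightarrow> ('a \<Rightarrow> real) \<Rightarrow> ('a \<Rightarrow> 'a \<Rightarrow> real) \<Rightarrow> 'a set \<Rightarrow> real" where
  "version_age N ls l0 l S = delta_aux (card (N - S)) N ls l0 l S"

definition links_ok :: "nat \<Rightarrow> nat set set \<Rightarrow> bool" where
  "links_ok n E \<longleftrightarrow> (\<forall>e\<in>E. \<exists>a b. a \<noteq> b \<and> a \<in> {1..n} \<and> b \<in> {1..n} \<and> e = {a, b})"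

definition degree :: "nat set set \<Rightarrow> nat \<Rightarrow> nat" where
  "degree E i = card {e \<in> E. i \<in> e}"

definition unif_src :: "nat \<Rightarrow> real \<Rightarrow> nat \<Rightarrow> real" where
  "unif_src n lam j = lam / real n"

definition unif_gossip :: "nat \<Rightarrow> real \<Rightarrow> nat set set \<Rightarrow> nat \<Rightarrow> nat \<Rightarrow> real" where
  "unif_gossip n lam E a b = (if {a, b} \<in> E \<and> a \<noteq> b then lam / real n else 0)"

definition unif_age :: "nat \<Rightarrow> real \<Rightarrow> real \<Rightarrow> nat set set \<Rightarrow> nat \<Rightarrow> real" where
  "unif_age n lam ls E i = version_age {1..n} ls (unif_src n lam) (unif_gossip n lam E) {i}"

end

theory Submission imports Defs begin

text \<open>Write \<open>q = \<lambda>/n\<close> (\<open>unit_rate\<close>) and \<open>a = \<lambda>\<^sub>s n / (\<lambda> (d + 1))\<close> (\<open>base_age\<close>).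
  When \<open>m\<close> of the \<open>d\<close> neighbours of \<open>i\<close> are still outside a set \<open>S \<ni> i\<close>, the source feeds \<open>S\<close>
  at rate \<open>|S| q \<ge> (d - m + 1) q\<close> and each missing neighbour gossips into \<open>S\<close> at rate at least \<open>q\<close>,
  moving to a state with \<open>m - 1\<close> missing neighbours. Downward induction on \<open>S\<close> therefore bounds
  \<open>\<Delta>\<^sub>S\<close> by \<open>T m\<close> (\<open>star_age a d m\<close>), the solution of \<open>(d + 1) T m = (d + 1) a + m T (m - 1)\<close>,
  \<open>T 0 = a\<close>; in particular \<open>\<Delta>\<^sub>i \<le> T d\<close>, and \<open>T d\<close> unfolds to the stated closed form.
  If the neighbours of \<open>i\<close> are leaves, all these rates are exact and the bound is attained.\<close>

lemma subset_downward_induct [consumes 2, case_names step]: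
  assumes "finite N" "S \<subseteq> N"
    and step: "\<And>S. S \<subseteq> N \<Longrightarrow> (\<And>x. x \<in> N - S \<Longrightarrow> P (insert x S)) \<Longrightarrow> P S"
  shows "P S"
  using assms(2)
proof (induction "card (N - S)" arbitrary: S rule: less_induct)
  case less
  show ?case
  proof (rule step)
    fix x assume x: "x \<in> N - S"
    have "card (N - insert x S) < card (N - S)"
      using x \<open>finite N\<close> by (intro psubset_card_mono) auto
    then show "P (insert x S)" using less x by blast
  qed (use less in simp)
qed

subsection \<open>The recursion for the version age\<close>

lemma gossip_nbrs_subset: "gossip_nbrs N l S \<subseteq> N - S"
  by (auto simp: gossip_nbrs_def)

lemma version_age_rec:
  assumes "finite N" "S \<subseteq> N"
  shows "version_age N ls l0 l S =
    (ls + (\<Sum>x\<in>gossip_nbrs N l S. (\<Sum>j\<in>S. l x j) * version_age N ls l0 l (insert x S)))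
    / ((\<Sum>j\<in>S. l0 j) + (\<Sum>x\<in>gossip_nbrs N l S. \<Sum>j\<in>S. l x j))"
proof (cases "card (N - S)")
  case 0
  then have "S = N" using assms by (metis Diff_eq_empty_iff card_0_eq finite_Diff subset_antisym)
  then have "gossip_nbrs N l S = {}" using gossip_nbrs_subset[of N l S] by blast
  then show ?thesis using 0 by (simp add: version_age_def)
next
  case (Suc k)
  have "card (N - insert x S) = k" if "x \<in> gossip_nbrs N l S" for x
  proof -
    have "x \<in> N - S" using gossip_nbrs_subset that by (rule subsetD)
    then have "card (N - S - {x}) = k" using card_Diff_singleton Suc by (metis diff_Suc_1)
    moreover have "N - insert x S = N - S - {x}" by blast
    ultimately show ?thesis by (simp only:)
  qed
  then have "(\<Sum>x\<in>gossip_nbrs N l S. (\<Sum>j\<in>S. l x j) * version_age N ls l0 l (insert x S))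
    = (\<Sum>x\<in>gossip_nbrs N l S. (\<Sum>j\<in>S. l x j) * delta_aux k N ls l0 l (insert x S))"
    unfolding version_age_def by (intro sum.cong) simp_all
  with Suc show ?thesis unfolding version_age_def by (simp only: delta_aux.simps)
qed

lemma weighted_mean_le:
  fixes w f :: "'a \<Rightarrow> real"
  assumes "finite G" "H \<subseteq> G" "c > 0"
    and G: "\<And>x. x \<in> G \<Longrightarrow> 0 \<le> w x \<and> f x \<le> D"
    and H: "\<And>x. x \<in> H \<Longrightarrow> q \<le> w x \<and> f x \<le> D'"
    and "D' \<le> D"
    and s: "s \<le> c * D + real (card H) * q * (D - D')"
  shows "(s + (\<Sum>x\<in>G. w x * f x)) / (c + (\<Sum>x\<in>G. w x)) \<le> D"
proof -
  have "(\<Sum>x\<in>G. w x * f x) = (\<Sum>x\<in>G - H. w x * f x) + (\<Sum>x\<in>H. w x * f x)"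
    using assms(1,2) by (simp add: sum.subset_diff)
  also have "\<dots> \<le> (\<Sum>x\<in>G - H. w x * D) + (\<Sum>x\<in>H. w x * D')"
    using G H assms(2) by (intro add_mono sum_mono mult_left_mono) auto
  also have "\<dots> = (\<Sum>x\<in>G. w x) * D - (\<Sum>x\<in>H. w x * (D - D'))"
  proof -
    have "(\<Sum>x\<in>G. w x) * D = (\<Sum>x\<in>G - H. w x * D) + (\<Sum>x\<in>H. w x * D)"
      using assms(1,2) by (simp add: sum_distrib_right distrib_right sum.subset_diff)
    moreover have "(\<Sum>x\<in>H. w x * D') = (\<Sum>x\<in>H. w x * D) - (\<Sum>x\<in>H. w x * (D - D'))"
      by (simp add: sum_subtractf[symmetric] algebra_simps)
    ultimately show ?thesis by simp
  qed
  finally have "(\<Sum>x\<in>G. w x * f x) \<le> (\<Sum>x\<in>G. w x) * D - (\<Sum>x\<in>H. w x * (D - D'))" .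
  moreover have "(\<Sum>x\<in>H. q * (D - D')) \<le> (\<Sum>x\<in>H. w x * (D - D'))"
    using H \<open>D' \<le> D\<close> by (intro sum_mono mult_right_mono) auto
  ultimately have "s + (\<Sum>x\<in>G. w x * f x) \<le> D * (c + (\<Sum>x\<in>G. w x))"
    using s by (simp add: algebra_simps)
  moreover have "c + (\<Sum>x\<in>G. w x) > 0"
    using \<open>c > 0\<close> G by (smt (verit) sum_nonneg)
  ultimately show ?thesis by (simp add: divide_le_eq)
qed

subsection \<open>The comparison sequence\<close>

fun star_age :: "real \<Rightarrow> nat \<Rightarrow> nat \<Rightarrow> real" where
  "star_age a d 0 = a"
| "star_age a d (Suc m) = a + (real m + 1) / (real d + 1) * star_age a d m"

lemma star_age_ge: "a \<ge> 0 \<Longrightarrow> star_age a d m \<ge> a"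
  by (induction m) (auto simp: add_increasing2)

lemma star_age_mono:
  assumes "a \<ge> 0" "m \<le> m'"
  shows "star_age a d m \<le> star_age a d m'"
proof -
  have "star_age a d m \<le> star_age a d (Suc m)" for m
  proof (induction m)
    case (Suc m)
    have "(real m + 1) / (real d + 1) * star_age a d m
        \<le> (real (Suc m) + 1) / (real d + 1) * star_age a d (Suc m)"
      using Suc star_age_ge[OF \<open>a \<ge> 0\<close>, of d m] \<open>a \<ge> 0\<close>
      by (intro mult_mono) (auto simp: divide_right_mono)
    then show ?case by simp
  qed (use \<open>a \<ge> 0\<close> in simp)
  then show ?thesis using \<open>m \<le> m'\<close> by (metis incseq_SucI incseqD)
qed

lemma star_age_rec: "(real d + 1) * star_age a d m = (real d + 1) * a + real m * star_age a d (m - 1)"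
  by (cases m) (auto simp: field_simps)

lemma star_age_balance:
  assumes "k \<le> d"
  shows "(real k + 1) * star_age a d (d - k)
    + real (d - k) * (star_age a d (d - k) - star_age a d (d - k - 1)) = (real d + 1) * a"
  using star_age_rec[of d a "d - k"] assms by (simp add: of_nat_diff algebra_simps)

lemma star_age_closed:
  "star_age a d m = a * (1 + (\<Sum>j<m. \<Prod>t\<le>j. (real m - real t) / (real d + 1)))"
proof (induction m)
  case (Suc m)
  have shift: "(\<Prod>t\<le>Suc j. (real (Suc m) - real t) / (real d + 1))
      = (real m + 1) / (real d + 1) * (\<Prod>t\<le>j. (real m - real t) / (real d + 1))" for j
    by (subst prod.atMost_Suc_shift) simp
  have "(\<Sum>j<Suc m. \<Prod>t\<le>j. (real (Suc m) - real t) / (real d + 1))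
     = (real m + 1) / (real d + 1) * (1 + (\<Sum>j<m. \<Prod>t\<le>j. (real m - real t) / (real d + 1)))"
    by (simp only: sum.lessThan_Suc_shift shift) (simp add: sum_distrib_left algebra_simps)
  then show ?case using Suc by (simp add: algebra_simps)
qed simp

subsection \<open>Uniform link rate networks\<close>

definition link_nbrs :: "nat set set \<Rightarrow> nat \<Rightarrow> nat set" where
  "link_nbrs E i = {j. {i, j} \<in> E}"

lemma link_distinct:
  assumes "links_ok n E" "{a, b} \<in> E"
  shows "a \<noteq> b" "a \<in> {1..n}" "b \<in> {1..n}"
proof -
  obtain x y where "x \<noteq> y" "x \<in> {1..n}" "y \<in> {1..n}" "{a, b} = {x, y}"
    using assms unfolding links_ok_def by blast
  then show "a \<noteq> b" "a \<in> {1..n}" "b \<in> {1..n}" by (auto simp: doubleton_eq_iff)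
qed

lemma link_nbrs_subset: "links_ok n E \<Longrightarrow> link_nbrs E i \<subseteq> {1..n} - {i}"
  unfolding link_nbrs_def using link_distinct by blast

lemma unif_gossip_link:
  "links_ok n E \<Longrightarrow> unif_gossip n lam E a b = (if {a, b} \<in> E then lam / real n else 0)"
  unfolding unif_gossip_def using link_distinct by metis

lemma card_link_nbrs:
  assumes "links_ok n E"
  shows "card (link_nbrs E i) = degree E i"
proof -
  have "bij_betw (\<lambda>j. {i, j}) (link_nbrs E i) {e \<in> E. i \<in> e}"
  proof (rule bij_betwI')
    fix x y assume "x \<in> link_nbrs E i" "y \<in> link_nbrs E i"
    then show "({i, x} = {i, y}) = (x = y)"
      using link_nbrs_subset[OF assms] by (auto simp: doubleton_eq_iff)
  next
    fix x assume "x \<in> link_nbrs E i" then show "{i, x} \<in> {e \<in> E. i \<in> e}"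
      by (simp add: link_nbrs_def)
  next
    fix e assume "e \<in> {e \<in> E. i \<in> e}"
    then have e: "e \<in> E" "i \<in> e" by auto
    then obtain a b where "e = {a, b}" using assms unfolding links_ok_def by metis
    then have "e = {i, b} \<or> e = {i, a}" using e by (cases "i = a") (simp_all add: insert_commute)
    then show "\<exists>x\<in>link_nbrs E i. e = {i, x}" using e by (auto simp: link_nbrs_def)
  qed
  then show ?thesis unfolding degree_def by (simp add: bij_betw_same_card)
qed

lemma sum_unif_src: "(\<Sum>j\<in>S. unif_src n lam j) = real (card S) * (lam / real n)"
  by (simp add: unif_src_def)

lemma degree_one_link:
  assumes "degree E j = 1" "{i, j} \<in> E" "e \<in> E" "j \<in> e"
  shows "e = {i, j}"
proof -
  obtain e' where e': "{e \<in> E. j \<in> e} = {e'}"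
    using assms(1) unfolding degree_def by (rule card_1_singletonE)
  have "{i, j} \<in> {e \<in> E. j \<in> e}" "e \<in> {e \<in> E. j \<in> e}" using assms(2-4) by auto
  then show ?thesis unfolding e' by simp
qed

context
  fixes n :: nat and lam ls :: real and E :: "nat set set" and i :: nat
  assumes lam: "lam > 0" and ls: "ls > 0" and links: "links_ok n E" and i: "i \<in> {1..n}"
begin

abbreviation (input) "nbrs \<equiv> link_nbrs E i"
abbreviation (input) "deg \<equiv> degree E i"
abbreviation (input) "age S \<equiv> version_age {1..n} ls (unif_src n lam) (unif_gossip n lam E) S"
abbreviation (input) "senders S \<equiv> gossip_nbrs {1..n} (unif_gossip n lam E) S"

definition unit_rate :: real where
  "unit_rate = lam / real n"

definition base_age :: real where
  "base_age = ls / lam * (real n / (real deg + 1))"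

lemma unit_rate_pos: "unit_rate > 0"
  using lam i by (simp add: unit_rate_def)

lemma base_age_pos: "base_age > 0"
  using lam ls i by (simp add: base_age_def)

lemma ls_eq_base_age: "ls = unit_rate * (real deg + 1) * base_age"
proof -
  have "real n \<noteq> 0" "real deg + 1 \<noteq> 0" "lam \<noteq> 0" using i lam by auto
  then show ?thesis by (simp add: unit_rate_def base_age_def)
qed

lemma sum_src_rate: "(\<Sum>j\<in>S. unif_src n lam j) = real (card S) * unit_rate"
  by (simp add: sum_unif_src unit_rate_def)

lemma gossip_rate: "unif_gossip n lam E x y = (if {x, y} \<in> E then unit_rate else 0)"
  by (simp add: unif_gossip_link[OF links] unit_rate_def)

lemma gossip_rate_nonneg: "unif_gossip n lam E x y \<ge> 0"
  using unit_rate_pos by (simp add: gossip_rate)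

lemma nbrs_subset: "nbrs \<subseteq> {1..n} - {i}"
  using link_nbrs_subset[OF links] .

lemma i_notin_nbrs: "i \<notin> nbrs"
  using nbrs_subset by auto

lemma card_nbrs: "card nbrs = deg"
  using card_link_nbrs[OF links] .

lemma finite_nbrs: "finite nbrs"
  using nbrs_subset by (rule finite_subset) simp

lemma card_Int_nbrs_le: "card (S \<inter> nbrs) \<le> deg"
  using card_mono[OF finite_nbrs, of "S \<inter> nbrs"] card_nbrs by simp

lemma card_insert_Int_nbrs:
  "finite S \<Longrightarrow> x \<notin> S \<Longrightarrow> card (insert x S \<inter> nbrs) = (if x \<in> nbrs then card (S \<inter> nbrs) + 1 else card (S \<inter> nbrs))"
  by (auto simp: Int_insert_left)

lemma card_insert_i: "finite S \<Longrightarrow> card (insert i (S \<inter> nbrs)) = card (S \<inter> nbrs) + 1"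
  using i_notin_nbrs by simp

lemma card_nbrs_Diff: "card (nbrs - S) = deg - card (S \<inter> nbrs)"
  using card_nbrs finite_nbrs by (metis Int_commute card_Diff_subset_Int finite_Int)

lemma gossip_from_nbr:
  assumes "finite S" "i \<in> S" "x \<in> nbrs"
  shows "unit_rate \<le> (\<Sum>j\<in>S. unif_gossip n lam E x j)"
proof -
  have "unif_gossip n lam E x i = unit_rate"
    using assms(3) by (simp add: gossip_rate link_nbrs_def insert_commute)
  moreover have "unif_gossip n lam E x i \<le> (\<Sum>j\<in>S. unif_gossip n lam E x j)"
    using assms(2) gossip_rate_nonneg assms(1) by (rule member_le_sum)
  ultimately show ?thesis by simp
qed

lemma version_age_le_star_age:
  assumes "S \<subseteq> {1..n}" "i \<in> S"
  shows "age S \<le> star_age base_age deg (deg - card (S \<inter> nbrs))"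
  using finite_atLeastAtMost assms(1) assms(2)
proof (induction S rule: subset_downward_induct)
  case (step S)
  define k where "k = card (S \<inter> nbrs)"
  define T where "T = star_age base_age deg (deg - k)"
  define T' where "T' = star_age base_age deg (deg - k - 1)"
  define w where "w x = (\<Sum>j\<in>S. unif_gossip n lam E x j)" for x
  have finS: "finite S" using step.hyps by (rule finite_subset) simp
  have "k \<le> deg" unfolding k_def by (rule card_Int_nbrs_le)
  have "T' \<le> T"
    unfolding T_def T'_def using base_age_pos by (intro star_age_mono) simp_all
  have "0 \<le> T"
    unfolding T_def using star_age_ge[of base_age deg "deg - k"] base_age_pos by simp
  have "card (insert i (S \<inter> nbrs)) \<le> card S"
    using finS step.prems by (intro card_mono) auto
  then have card_S: "real k + 1 \<le> real (card S)"
    using card_insert_i[OF finS] unfolding k_def by linarith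
  have "age S = (ls + (\<Sum>x\<in>senders S. w x * age (insert x S))) / (real (card S) * unit_rate + (\<Sum>x\<in>senders S. w x))"
    using version_age_rec[OF finite_atLeastAtMost step.hyps, of ls "unif_src n lam" "unif_gossip n lam E"]
    unfolding w_def sum_src_rate .
  also have "\<dots> \<le> T"
  proof (rule weighted_mean_le)
    show "finite (senders S)" using gossip_nbrs_subset by (rule finite_subset) simp
    show nbrs_senders: "nbrs - S \<subseteq> senders S"
    proof
      fix x assume x: "x \<in> nbrs - S"
      then have "0 < w x"
        using gossip_from_nbr[OF finS step.prems] unit_rate_pos unfolding w_def by force
      then show "x \<in> senders S" using x nbrs_subset by (auto simp: gossip_nbrs_def w_def)
    qed
    show "real (card S) * unit_rate > 0"
      using card_S unit_rate_pos by (intro mult_pos_pos) linarith+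
    have IH: "age (insert x S) \<le> star_age base_age deg (deg - card (insert x S \<inter> nbrs))"
      and sender_notin: "x \<notin> S" if "x \<in> senders S" for x
      using step.IH[of x] subsetD[OF gossip_nbrs_subset that] step.prems by simp_all
    show "0 \<le> w x \<and> age (insert x S) \<le> T" if "x \<in> senders S" for x
    proof
      show "0 \<le> w x" unfolding w_def using gossip_rate_nonneg by (rule sum_nonneg)
      have "deg - card (insert x S \<inter> nbrs) \<le> deg - k"
        using card_insert_Int_nbrs[OF finS sender_notin[OF that]] unfolding k_def
        by (simp add: diff_le_mono2)
      then show "age (insert x S) \<le> T"
        unfolding T_def using IH[OF that] star_age_mono base_age_pos
        by (meson less_imp_le order_trans)
    qed
    show "unit_rate \<le> w x \<and> age (insert x S) \<le> T'" if "x \<in> nbrs - S" for x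
    proof
      show "unit_rate \<le> w x" unfolding w_def using gossip_from_nbr[OF finS step.prems] that by simp
      have "card (insert x S \<inter> nbrs) = k + 1"
        using card_insert_Int_nbrs[OF finS, of x] that unfolding k_def by (simp del: Int_insert_left)
      then show "age (insert x S) \<le> T'"
        using IH[OF subsetD[OF nbrs_senders that]] unfolding T'_def by (simp add: diff_diff_left)
    qed
    show "T' \<le> T" by fact
    have "ls = unit_rate * ((real k + 1) * T + real (deg - k) * (T - T'))"
      unfolding T_def T'_def using ls_eq_base_age star_age_balance[OF \<open>k \<le> deg\<close>] by simp
    also have "\<dots> = (real k + 1) * unit_rate * T + real (deg - k) * unit_rate * (T - T')"
      by (simp add: algebra_simps)
    also have "\<dots> \<le> real (card S) * unit_rate * T + real (card (nbrs - S)) * unit_rate * (T - T')"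
      using card_S unit_rate_pos \<open>0 \<le> T\<close>
      by (simp add: card_nbrs_Diff k_def mult_right_mono)
    finally show "ls \<le> real (card S) * unit_rate * T + real (card (nbrs - S)) * unit_rate * (T - T')" .
  qed
  finally show ?case unfolding T_def k_def .
qed

lemma gossip_into_leaf_star:
  assumes leaves: "\<And>j. j \<in> nbrs \<Longrightarrow> degree E j = 1"
    and "finite S" "i \<in> S" "S \<subseteq> insert i nbrs" "x \<notin> S"
  shows "(\<Sum>j\<in>S. unif_gossip n lam E x j) = (if x \<in> nbrs then unit_rate else 0)"
proof -
  have "{x, s} \<in> E \<longleftrightarrow> s = i \<and> x \<in> nbrs" if "s \<in> S" for s
  proof (cases "s = i")
    case True
    then show ?thesis by (simp add: link_nbrs_def insert_commute)
  next
    case False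
    then have "s \<in> nbrs" using that assms(4) by blast
    have "{x, s} \<notin> E"
    proof
      assume "{x, s} \<in> E"
      then have "{x, s} = {i, s}"
        using degree_one_link[OF leaves[OF \<open>s \<in> nbrs\<close>]] \<open>s \<in> nbrs\<close> by (simp add: link_nbrs_def)
      then show False using that assms(3,5) by (auto simp: doubleton_eq_iff)
    qed
    then show ?thesis using False by simp
  qed
  then have "(\<Sum>j\<in>S. unif_gossip n lam E x j) = (\<Sum>j\<in>S. if j = i then (if x \<in> nbrs then unit_rate else 0) else 0)"
    by (intro sum.cong) (auto simp: gossip_rate)
  then show ?thesis using assms(2,3) by simp
qed

lemma version_age_eq_star_age:
  assumes leaves: "\<And>j. j \<in> nbrs \<Longrightarrow> degree E j = 1"
    and "i \<in> S" "S \<subseteq> insert i nbrs"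
  shows "age S = star_age base_age deg (deg - card (S \<inter> nbrs))"
proof -
  have "S \<subseteq> {1..n}" using assms(3) i nbrs_subset by blast
  with finite_atLeastAtMost[of 1 n] show ?thesis
    using assms(2,3)
  proof (induction S rule: subset_downward_induct)
    case (step S)
    define k where "k = card (S \<inter> nbrs)"
    define T' where "T' = star_age base_age deg (deg - k - 1)"
    have finS: "finite S" using step.hyps by (rule finite_subset) simp
    have "insert i (S \<inter> nbrs) = S" using step.prems by blast
    then have card_S: "card S = k + 1"
      using card_insert_i[OF finS] by (simp add: k_def)
    have w: "(\<Sum>j\<in>S. unif_gossip n lam E x j) = (if x \<in> nbrs then unit_rate else 0)" if "x \<notin> S" for x
      using gossip_into_leaf_star[OF leaves finS step.prems that] .
    have senders: "senders S = nbrs - S"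
      using w unit_rate_pos nbrs_subset by (auto simp: gossip_nbrs_def split: if_splits)
    have IH: "age (insert x S) = T'" if "x \<in> nbrs - S" for x
    proof -
      have "card (insert x S \<inter> nbrs) = k + 1"
        using card_insert_Int_nbrs[OF finS, of x] that unfolding k_def by (simp del: Int_insert_left)
      then show ?thesis
        using step.IH[of x] step.prems that nbrs_subset unfolding T'_def by (auto simp: diff_diff_left)
    qed
    have "age S = (ls + (\<Sum>x\<in>nbrs - S. (\<Sum>j\<in>S. unif_gossip n lam E x j) * age (insert x S)))
        / (real (card S) * unit_rate + (\<Sum>x\<in>nbrs - S. \<Sum>j\<in>S. unif_gossip n lam E x j))"
      using version_age_rec[OF finite_atLeastAtMost step.hyps, of ls "unif_src n lam" "unif_gossip n lam E"]
      unfolding senders sum_src_rate .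
    also have "\<dots> = (ls + (\<Sum>x\<in>nbrs - S. unit_rate * T')) / (real (card S) * unit_rate + (\<Sum>x\<in>nbrs - S. unit_rate))"
    proof -
      have "(\<Sum>x\<in>nbrs - S. (\<Sum>j\<in>S. unif_gossip n lam E x j) * age (insert x S)) = (\<Sum>x\<in>nbrs - S. unit_rate * T')"
        "(\<Sum>x\<in>nbrs - S. \<Sum>j\<in>S. unif_gossip n lam E x j) = (\<Sum>x\<in>nbrs - S. unit_rate)"
        using w IH by (intro sum.cong; simp)+
      then show ?thesis by (simp only:)
    qed
    also have "\<dots> = (ls + real (deg - k) * unit_rate * T') / (real (k + 1) * unit_rate + real (deg - k) * unit_rate)"
      using card_nbrs_Diff[of S] by (simp add: card_S k_def)
    also have "\<dots> = star_age base_age deg (deg - k)"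
    proof -
      have "k \<le> deg" unfolding k_def by (rule card_Int_nbrs_le)
      then have "real (k + 1) + real (deg - k) = real deg + 1"
        by (simp add: of_nat_diff)
      then have "real (k + 1) * unit_rate + real (deg - k) * unit_rate = unit_rate * (real deg + 1)"
        by (metis distrib_right mult.commute)
      moreover have "ls + real (deg - k) * unit_rate * T' = unit_rate * ((real deg + 1) * star_age base_age deg (deg - k))"
        unfolding star_age_rec[of deg base_age "deg - k"] T'_def by (subst ls_eq_base_age) (simp add: algebra_simps)
      ultimately show ?thesis using unit_rate_pos by simp
    qed
    finally show ?case unfolding k_def .
  qed
qed

end

theorem mainTheorem9:
  fixes n d i :: nat and lam ls :: real and E :: "nat set set"
  assumes "n \<ge> 2" and "1 \<le> d" and "d \<le> n - 1"
    and "lam > 0" and "ls > 0"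
    and "links_ok n E"
    and "i \<in> {1..n}" and "degree E i = d"
  defines "B \<equiv> ls / lam * (real n / (real d + 1)) *
           (1 + (\<Sum>d2 = 0..d - 1. \<Prod>d1 = 0..d2. (real d - real d1) / (real d + 1)))"
  shows "unif_age n lam ls E i \<le> B \<and>
         ((\<forall>j. {i, j} \<in> E \<longrightarrow> degree E j = 1) \<longrightarrow> unif_age n lam ls E i = B)"
proof -
  have a: "base_age n lam ls E i = ls / lam * (real n / (real d + 1))"
    using base_age_def[OF assms(4-7)] assms(8) by simp
  have "{0..d - 1} = {..<d}" using \<open>1 \<le> d\<close> by auto
  then have B: "B = star_age (base_age n lam ls E i) d d"
    unfolding a B_def star_age_closed by (simp add: atLeast0AtMost)
  have i: "{i} \<subseteq> {1..n}" "{i} \<inter> link_nbrs E i = {}"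
    using link_nbrs_subset[OF \<open>links_ok n E\<close>] \<open>i \<in> {1..n}\<close> by auto
  have age: "unif_age n lam ls E i = version_age {1..n} ls (unif_src n lam) (unif_gossip n lam E) {i}"
    by (simp add: unif_age_def)
  show ?thesis
  proof
    show "unif_age n lam ls E i \<le> B"
      using version_age_le_star_age[OF assms(4-7) i(1)] by (simp add: age B i(2) assms(8))
    show "(\<forall>j. {i, j} \<in> E \<longrightarrow> degree E j = 1) \<longrightarrow> unif_age n lam ls E i = B"
    proof
      assume "\<forall>j. {i, j} \<in> E \<longrightarrow> degree E j = 1"
      then have "\<And>j. j \<in> link_nbrs E i \<Longrightarrow> degree E j = 1" by (simp add: link_nbrs_def)
      from version_age_eq_star_age[OF assms(4-7) this, of "{i}"]
      show "unif_age n lam ls E i = B" by (simp add: age B i(2) assms(8))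
    qed
  qed
qed

end
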